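(* Let $r\ge3$, $n>r$. In $T$ define $\zeta(T_{\rho^{-1}})=(F_nF_{n-1}\cdots F_{r+1})(F_1F_2\cdots F_r)1_\omega$ and $\zeta(T_\rho)=(E_rE_{r+1}\cdots E_{n-1})(E_{r-1}E_{r-2}\cdots E_1)E_n1_\omega$. Then $\zeta(T_{\rho^{-1}})\zeta(T_\rho)=1_\omega$ and $\zeta(T_\rho)\zeta(T_{\rho^{-1}})=1_\omega$.
   Context: $T$ is the $\mathbb{Q}(v)$-algebra with generators $E_i,F_i,K_i^{\pm1}$ ($1\le i\le n$, indices mod $n$) and relations: $K_iK_j=K_jK_i$; $K_iK_i^{-1}=K_i^{-1}K_i=1$; $K_iE_j=v^{\epsilon^+(i,j)}E_jK_i$; $K_iF_j=v^{-\epsilon^+(i,j)}F_jK_i$ ($\epsilon^+(i,j)=1$ if $j=i$, $-1$ if $j\equiv i-1\pmod n$, $0$ otherwise); $E_iF_j-F_jE_i=\delta_{ij}\frac{K_iK_{i+1}^{-1}-K_i^{-1}K_{i+1}}{v-v^{-1}}$; $E_iE_j=E_jE_i$, $F_iF_j=F_jF_i$ if $i-j\not\equiv\pm1$; $E_i^2E_j-(v+v^{-1})E_iE_jE_i+E_jE_i^2=0$, $F_i^2F_j-(v+v^{-1})F_iF_jF_i+F_jF_i^2=0$ if $i-j\equiv\pm1\pmod n$; $K_1\cdots K_n=v^r$; $\prod_{j=0}^r(K_i-v^j)=0$. For a composition $\lambda$ of $r$ into $n$ nonnegative parts, $1_\lambda=\prod_{i=1}^n\prod_{s=1}^{\lambda_i}\frac{K_iv^{-s+1}-K_i^{-1}v^{s-1}}{v^s-v^{-s}}$;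 $\omega=(1,\dots,1,0,\dots,0)$ with $r$ ones and $n-r$ zeros. *)

theory Defs
  imports "HOL-Computational_Algebra.Polynomial" "HOL-Computational_Algebra.Fraction_Field"
begin

type_synonym qv = "rat poly fract"

definition vq :: qv where "vq = Fract [:0, 1:] 1"

definition sc :: "nat \<Rightarrow> nat \<Rightarrow> nat" where "sc n i = (if i = n then 1 else i + 1)"
definition pr :: "nat \<Rightarrow> nat \<Rightarrow> nat" where "pr n i = (if i = 1 then n else i - 1)"

definition adj :: "nat \<Rightarrow> nat \<Rightarrow> nat \<Rightarrow> bool" where
  "adj n i j \<longleftrightarrow> j = sc n i \<or> j = pr n i"

definition epsp :: "nat \<Rightarrow> nat \<Rightarrow> nat \<Rightarrow> int" where
  "epsp n i j = (if j = i then 1 else if j = pr n i then -1 else 0)"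

text \<open>A model of the defining relations of T: a unital associative Q(v)-algebra,
  given as a ring 'a with a central unital ring homomorphism emb from Q(v),
  together with elements E i, F i, K i, Ki i (= K i inverse), i in {1..n}.
  An identity holds in T iff it holds in every such model (T is the universal one).\<close>
definition T_rel :: "nat \<Rightarrow> nat \<Rightarrow> (qv \<Rightarrow> 'a::ring_1) \<Rightarrow> (nat \<Rightarrow> 'a) \<Rightarrow> (nat \<Rightarrow> 'a)
    \<Rightarrow> (nat \<Rightarrow> 'a) \<Rightarrow> (nat \<Rightarrow> 'a) \<Rightarrow> bool" where
  "T_rel n r emb E F K Ki \<longleftrightarrow>
     emb 0 = 0 \<and> emb 1 = 1 \<and> (\<forall>a b. emb (a + b) = emb a + emb b) \<and>
     (\<forall>a b. emb (a * b) = emb a * emb b) \<and> (\<forall>a x. emb a * x = x * emb a) \<and>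
     (\<forall>i\<in>{1..n}. \<forall>j\<in>{1..n}.
        K i * K j = K j * K i \<and>
        K i * E j = emb (vq powi epsp n i j) * E j * K i \<and>
        K i * F j = emb (vq powi (- epsp n i j)) * F j * K i \<and>
        E i * F j - F j * E i =
          (if i = j then emb (inverse (vq - inverse vq)) *
              (K i * Ki (sc n i) - Ki i * K (sc n i)) else 0) \<and>
        (\<not> adj n i j \<longrightarrow> E i * E j = E j * E i \<and> F i * F j = F j * F i) \<and>
        (adj n i j \<longrightarrow>
           E i * E i * E j - emb (vq + inverse vq) * E i * E j * E i + E j * E i * E i = 0 \<and>
           F i * F i * F j - emb (vq + inverse vq) * F i * F j * F i + F j * F i * F i = 0)) \<and>
     (\<forall>i\<in>{1..n}. K i * Ki i = 1 \<and> Ki i * K i = 1 \<and>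
        prod_list (map (\<lambda>j. K i - emb (vq ^ j)) [0..<r+1]) = 0) \<and>
     prod_list (map K [1..<n+1]) = emb (vq ^ r)"

definition one_lam :: "nat \<Rightarrow> (qv \<Rightarrow> 'a::ring_1) \<Rightarrow> (nat \<Rightarrow> 'a) \<Rightarrow> (nat \<Rightarrow> 'a)
    \<Rightarrow> (nat \<Rightarrow> nat) \<Rightarrow> 'a" where
  "one_lam n emb K Ki lam =
     prod_list (map (\<lambda>i. prod_list (map (\<lambda>s.
        emb (inverse (vq ^ s - inverse (vq ^ s))) *
        (emb (vq powi (- int s + 1)) * K i - emb (vq powi (int s - 1)) * Ki i))
       [1..<lam i + 1])) [1..<n+1])"

definition omega :: "nat \<Rightarrow> nat \<Rightarrow> nat" where
  "omega r i = (if 1 \<le> i \<and> i \<le> r then 1 else 0)"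

definition zeta_rho_inv :: "nat \<Rightarrow> nat \<Rightarrow> (qv \<Rightarrow> 'a::ring_1) \<Rightarrow> (nat \<Rightarrow> 'a)
    \<Rightarrow> (nat \<Rightarrow> 'a) \<Rightarrow> (nat \<Rightarrow> 'a) \<Rightarrow> 'a" where
  "zeta_rho_inv n r emb F K Ki =
     prod_list (map F (rev [r+1..<n+1])) * prod_list (map F [1..<r+1])
       * one_lam n emb K Ki (omega r)"

definition zeta_rho :: "nat \<Rightarrow> nat \<Rightarrow> (qv \<Rightarrow> 'a::ring_1) \<Rightarrow> (nat \<Rightarrow> 'a)
    \<Rightarrow> (nat \<Rightarrow> 'a) \<Rightarrow> (nat \<Rightarrow> 'a) \<Rightarrow> 'a" where
  "zeta_rho n r emb E K Ki =
     prod_list (map E [r..<n]) * prod_list (map E (rev [1..<r])) * E n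
       * one_lam n emb K Ki (omega r)"

end

theory Submission
  imports Defs
begin

text \<open>The \<open>K\<^sub>i\<close> commute and each is annihilated by \<open>\<Prod>j = 0..r. (K\<^sub>i - v\<^sup>j)\<close>,
  a product of distinct linear factors, so every element is a sum of joint eigenvectors
  (weight vectors); by \<open>K\<^sub>1 \<dots> K\<^sub>n = v\<^sup>r\<close> their weights are compositions of \<open>r\<close>. On weight \<open>\<mu>\<close> the
  element \<open>1\<^sub>\<omega>\<close> acts by \<open>\<Prod>\<^sub>i [\<mu>\<^sub>i choose \<omega>\<^sub>i]\<close>, which vanishes unless \<open>\<mu> \<ge> \<omega>\<close>, i.e. unless
  \<open>\<mu> = \<omega>\<close>. Hence \<open>1\<^sub>\<omega>\<close> is a weight vector of weight \<open>\<omega>\<close> and fixes every vector of weight \<open>\<omega>\<close>.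

  On weights with entries 0 and 1, \<open>E\<^sub>j\<close> moves a unit from position \<open>j+1\<close> to \<open>j\<close> and \<open>F\<^sub>j\<close> moves it
  back; the relation for \<open>E\<^sub>j F\<^sub>j - F\<^sub>j E\<^sub>j\<close> gives \<open>F\<^sub>j E\<^sub>j z = z\<close> when the weight of \<open>z\<close> is 0 at \<open>j\<close>
  and 1 at \<open>j+1\<close>, and \<open>E\<^sub>j F\<^sub>j z = z\<close> in the opposite case. Applied to \<open>1\<^sub>\<omega>\<close>, the factors of
  \<open>\<zeta>(T\<^sub>\<rho>)\<close> (and likewise of \<open>\<zeta>(T\<^sub>\<rho>\<inverse>)\<close>) move the gap of \<open>\<omega>\<close> once around the cycle, so the
  middle \<open>1\<^sub>\<omega>\<close> of either product acts trivially, and after commuting the \<open>F\<close>'s with the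
  \<open>E\<close>'s of disjoint index the factors cancel in pairs from the inside out.\<close>

lemma vq_nonzero: "vq \<noteq> 0"
  by (simp add: vq_def Zero_fract_def eq_fract)

lemma vq_power: "vq ^ k = Fract ([:0, 1:] ^ k) 1"
  by (induct k) (simp_all add: vq_def One_fract_def)

lemma vq_power_eq_iff: "vq ^ a = vq ^ b \<longleftrightarrow> a = b"
proof
  assume "vq ^ a = vq ^ b"
  then have "([:0, 1:] :: rat poly) ^ a = [:0, 1:] ^ b"
    by (simp add: vq_power eq_fract)
  then have "degree (([:0, 1:] :: rat poly) ^ a) = degree (([:0, 1:] :: rat poly) ^ b)"
    by simp
  then show "a = b"
    by (simp add: degree_power_eq)
qed simp

lemma vq_power_int_eq_iff: "vq powi a = vq powi b \<longleftrightarrow> a = b"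
proof
  assume "vq powi a = vq powi b"
  define N where "N = \<bar>a\<bar> + \<bar>b\<bar>"
  have "vq powi (a + N) = vq powi (b + N)"
    using \<open>vq powi a = vq powi b\<close> vq_nonzero by (simp add: power_int_add)
  moreover have "0 \<le> a + N" "0 \<le> b + N"
    by (simp_all add: N_def)
  ultimately have "vq ^ nat (a + N) = vq ^ nat (b + N)"
    by (simp add: power_int_def)
  then show "a = b"
    by (simp add: vq_power_eq_iff N_def)
qed simp

lemma vq_minus_inverse_nonzero: "vq - inverse vq \<noteq> 0"
proof
  assume "vq - inverse vq = 0"
  then have "vq ^ 2 = vq ^ 0"
    using vq_nonzero by (simp add: field_simps power2_eq_square)
  then show False
    by (simp only: vq_power_eq_iff)
qed

lemma prod_list_map_commute:
  fixes f g :: "'b \<Rightarrow> 'a::monoid_mult"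
  assumes "\<And>x y. x \<in> set xs \<Longrightarrow> y \<in> set ys \<Longrightarrow> f x * g y = g y * f x"
  shows "prod_list (map f xs) * prod_list (map g ys) = prod_list (map g ys) * prod_list (map f xs)"
proof -
  have f_commute: "f x * prod_list (map g ys) = prod_list (map g ys) * f x" if "x \<in> set xs" for x
    using assms[OF that] by (induction ys) (simp_all, metis mult.assoc)
  show ?thesis
    using f_commute by (induction xs) (simp_all, metis mult.assoc)
qed

locale central_field_embedding =
  fixes emb :: "'k::field \<Rightarrow> 'a::ring_1"
  assumes emb_0 [simp]: "emb 0 = 0" and emb_1 [simp]: "emb 1 = 1"
    and emb_add: "emb (a + b) = emb a + emb b"
    and emb_mult: "emb (a * b) = emb a * emb b"
    and emb_commute: "emb a * x = x * emb a"
begin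

lemma emb_diff: "emb (a - b) = emb a - emb b"
  by (metis add_diff_cancel emb_add eq_diff_eq)

lemma emb_minus: "emb (- a) = - emb a"
  using emb_diff[of 0 a] by simp

lemma emb_mult_left_commute: "x * (emb a * y) = emb a * (x * y)"
  by (metis emb_commute mult.assoc)

lemma emb_mult_emb: "emb a * (emb b * x) = emb (a * b) * x"
  by (simp add: emb_mult mult.assoc)

lemma emb_mult_eq_0_cancel: "a \<noteq> 0 \<Longrightarrow> emb a * x = 0 \<Longrightarrow> x = 0"
  by (metis emb_1 emb_mult_emb field_class.field_inverse mult_1 mult_zero_right)

lemma prod_list_mult_eigenvector:
  assumes "\<And>a. a \<in> set xs \<Longrightarrow> f a * z = emb (g a) * z"
  shows "prod_list (map f xs) * z = emb (prod_list (map g xs)) * z"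
  using assms
proof (induction xs)
  case (Cons a xs)
  have "prod_list (map f (a # xs)) * z = f a * (emb (prod_list (map g xs)) * z)"
    using Cons by (simp add: mult.assoc)
  also have "\<dots> = emb (prod_list (map g xs)) * (f a * z)"
    by (rule emb_mult_left_commute)
  also have "\<dots> = emb (prod_list (map g (a # xs))) * z"
    using Cons by (simp add: emb_mult_emb mult.commute)
  finally show ?case .
qed simp

text \<open>In effect, \<open>x\<close> is a sum of eigenvectors of \<open>X\<close> satisfying \<open>P\<close>: for the eigenvalue list
  \<open>c # cs\<close>, \<open>z = (\<Prod>d\<in>cs. X - d) x\<close> satisfies \<open>X z = c z\<close>, and \<open>x - z / q\<close> with
  \<open>q = (\<Prod>d\<in>cs. c - d) \<noteq> 0\<close> is annihilated by \<open>\<Prod>d\<in>cs. X - d\<close>.\<close>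
lemma eigenvector_induct:
  assumes "distinct cs" and "prod_list (map (\<lambda>c. X - emb c) cs) * x = 0" and "P x"
    and P_diff: "\<And>a b. P a \<Longrightarrow> P b \<Longrightarrow> P (a - b)"
    and P_scale: "\<And>c a. P a \<Longrightarrow> P (emb c * a)"
    and P_mult: "\<And>a. P a \<Longrightarrow> P (X * a)"
    and G_0: "G 0"
    and G_add: "\<And>a b. G a \<Longrightarrow> G b \<Longrightarrow> G (a + b)"
    and G_scale: "\<And>c a. G a \<Longrightarrow> G (emb c * a)"
    and G_eigenvector: "\<And>y c. P y \<Longrightarrow> c \<in> set cs \<Longrightarrow> X * y = emb c * y \<Longrightarrow> G y"
  shows "G x"
  using assms(1-3) G_eigenvector
proof (induction cs arbitrary: x)
  case Nil
  then show ?case using G_0 by simp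
next
  case (Cons c cs)
  define \<Pi> where "\<Pi> = prod_list (map (\<lambda>d. X - emb d) cs)"
  define q where "q = prod_list (map (\<lambda>d. c - d) cs)"
  define z where "z = \<Pi> * x"
  have P_\<Pi>: "P (\<Pi> * a)" if "P a" for a
    unfolding \<Pi>_def using that
    by (induction cs) (simp_all add: mult.assoc left_diff_distrib P_diff P_scale P_mult)
  have "q \<noteq> 0"
    using Cons.prems(1) by (auto simp: q_def prod_list_zero_iff)
  have z_eigen: "X * z = emb c * z"
    using Cons.prems(2) by (simp add: z_def \<Pi>_def mult.assoc left_diff_distrib)
  have "G z"
    using Cons.prems(3) z_eigen by (intro Cons.prems(4)) (simp_all add: z_def P_\<Pi>)
  have \<Pi>_z: "\<Pi> * z = emb q * z"
    unfolding \<Pi>_def q_def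
    by (rule prod_list_mult_eigenvector) (simp add: left_diff_distrib emb_diff z_eigen)
  define x' where "x' = x - emb (inverse q) * z"
  have "\<Pi> * x' = z - emb (inverse q) * (\<Pi> * z)"
    by (simp add: x'_def right_diff_distrib emb_mult_left_commute flip: z_def)
  also have "\<dots> = 0"
    using \<open>q \<noteq> 0\<close> by (simp add: \<Pi>_z emb_mult_emb)
  finally have "\<Pi> * x' = 0" .
  have "P x'"
    unfolding x'_def z_def using Cons.prems(3) by (intro P_diff P_scale P_\<Pi>)
  have "G x'"
  proof (rule Cons.IH)
    show "distinct cs"
      using Cons.prems(1) by simp
    show "prod_list (map (\<lambda>d. X - emb d) cs) * x' = 0"
      using \<open>\<Pi> * x' = 0\<close> by (simp only: \<Pi>_def)
    show "G y" if "P y" "d \<in> set cs" "X * y = emb d * y" for y d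
      using Cons.prems(4)[of y d] that by simp
  qed fact
  then have "G (x' + emb (inverse q) * z)"
    using \<open>G z\<close> by (intro G_add G_scale)
  then show ?case
    by (simp add: x'_def)
qed

end

lemma pr_sc: "i \<in> {1..n} \<Longrightarrow> pr n (sc n i) = i"
  by (auto simp: pr_def sc_def)

lemma sum_list_epsp:
  assumes "pr n i \<noteq> i" and "distinct js"
  shows "sum_list (map (epsp n i) js) = of_bool (i \<in> set js) - of_bool (pr n i \<in> set js)"
  using assms by (induction js) (auto simp: epsp_def)

text \<open>The scalar by which \<open>1\<^sub>\<lambda>\<close> acts on vectors of weight \<open>\<mu>\<close>: the product over \<open>i\<close> of the
  quantum binomial coefficients \<open>[\<mu>\<^sub>i choose \<lambda>\<^sub>i]\<close>.\<close>
definition one_lam_scalar :: "nat \<Rightarrow> (nat \<Rightarrow> nat) \<Rightarrow> (nat \<Rightarrow> int) \<Rightarrow> qv" where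
  "one_lam_scalar n lam \<mu> = prod_list (map (\<lambda>i. prod_list (map (\<lambda>s.
      inverse (vq ^ s - inverse (vq ^ s)) *
      (vq powi (- int s + 1) * vq powi \<mu> i - vq powi (int s - 1) * vq powi (- \<mu> i)))
    [1..<lam i + 1])) [1..<n+1])"

lemma one_lam_scalar_eq_0:
  assumes "i \<in> {1..n}" and "1 \<le> lam i" and "\<mu> i = 0"
  shows "one_lam_scalar n lam \<mu> = 0"
proof -
  let ?f = "\<lambda>s. inverse (vq ^ s - inverse (vq ^ s)) *
    (vq powi (- int s + 1) * vq powi \<mu> i - vq powi (int s - 1) * vq powi (- \<mu> i))"
  have "prod_list (map ?f [1..<lam i + 1]) = 0"
    unfolding prod_list_zero_iff set_map using assms(2,3) by (intro rev_image_eqI[of 1]) auto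
  moreover have "i \<in> set [1..<n+1]"
    using assms(1) by auto
  ultimately show ?thesis
    unfolding one_lam_scalar_def prod_list_zero_iff[of "map _ [1..<n+1]"] set_map
    by (intro rev_image_eqI[of i]) simp_all
qed

lemma one_lam_scalar_self:
  assumes "\<And>i. lam i \<le> 1"
  shows "one_lam_scalar n lam (\<lambda>i. int (lam i)) = 1"
proof -
  have prod_list_1: "prod_list (map f xs) = 1" if "\<forall>x\<in>set xs. f x = 1" for f :: "nat \<Rightarrow> qv" and xs
    using that by (induction xs) simp_all
  have "prod_list (map (\<lambda>s. inverse (vq ^ s - inverse (vq ^ s)) *
      (vq powi (- int s + 1) * vq powi int (lam i) - vq powi (int s - 1) * vq powi (- int (lam i))))
    [1..<lam i + 1]) = 1" for i
    using assms[of i] vq_minus_inverse_nonzero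
    by (cases "lam i") (simp_all add: power_int_minus)
  then show ?thesis
    unfolding one_lam_scalar_def by (intro prod_list_1) simp
qed

lemma sum_omega: "r \<le> N \<Longrightarrow> sum (omega r) {1..N} = r"
  by (induction N) (auto simp: omega_def)

locale T_algebra =
  fixes n r :: nat and emb :: "qv \<Rightarrow> 'a::ring_1" and E F K Ki :: "nat \<Rightarrow> 'a"
  assumes T_rel: "T_rel n r emb E F K Ki"

sublocale T_algebra \<subseteq> central_field_embedding emb
  using T_rel unfolding T_rel_def by unfold_locales blast+

context T_algebra
begin

lemma K_commute: "i \<in> {1..n} \<Longrightarrow> j \<in> {1..n} \<Longrightarrow> K i * K j = K j * K i"
  and K_E: "i \<in> {1..n} \<Longrightarrow> j \<in> {1..n} \<Longrightarrow> K i * E j = emb (vq powi epsp n i j) * E j * K i"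
  and K_F: "i \<in> {1..n} \<Longrightarrow> j \<in> {1..n} \<Longrightarrow> K i * F j = emb (vq powi (- epsp n i j)) * F j * K i"
  and E_F_commutator: "i \<in> {1..n} \<Longrightarrow> j \<in> {1..n} \<Longrightarrow> E i * F j - F j * E i =
     (if i = j then emb (inverse (vq - inverse vq)) * (K i * Ki (sc n i) - Ki i * K (sc n i)) else 0)"
  and Ki_K: "i \<in> {1..n} \<Longrightarrow> Ki i * K i = 1"
  and K_annihilator: "i \<in> {1..n} \<Longrightarrow> prod_list (map (\<lambda>j. K i - emb (vq ^ j)) [0..<r+1]) = 0"
  and prod_K: "prod_list (map K [1..<n+1]) = emb (vq ^ r)"
  using T_rel unfolding T_rel_def by (elim conjE; blast)+

lemma E_F_commute: "i \<in> {1..n} \<Longrightarrow> j \<in> {1..n} \<Longrightarrow> i \<noteq> j \<Longrightarrow> E i * F j = F j * E i"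
  using E_F_commutator by fastforce

definition weight_vector :: "(nat \<Rightarrow> int) \<Rightarrow> 'a \<Rightarrow> bool" where
  "weight_vector \<mu> z \<longleftrightarrow> (\<forall>i\<in>{1..n}. K i * z = emb (vq powi \<mu> i) * z)"

lemma weight_vector_cong:
  "weight_vector \<mu> z \<Longrightarrow> (\<And>i. i \<in> {1..n} \<Longrightarrow> \<mu> i = \<nu> i) \<Longrightarrow> weight_vector \<nu> z"
  unfolding weight_vector_def by auto

lemma weight_vector_K: "weight_vector \<mu> z \<Longrightarrow> i \<in> {1..n} \<Longrightarrow> K i * z = emb (vq powi \<mu> i) * z"
  unfolding weight_vector_def by auto

lemma weight_vector_Ki:
  assumes "weight_vector \<mu> z" and "i \<in> {1..n}"
  shows "Ki i * z = emb (vq powi (- \<mu> i)) * z"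
proof -
  have "Ki i * z = Ki i * (emb (vq powi (- \<mu> i)) * (emb (vq powi \<mu> i) * z))"
    using vq_nonzero by (simp add: emb_mult_emb power_int_minus)
  also have "\<dots> = emb (vq powi (- \<mu> i)) * (Ki i * (K i * z))"
    using assms by (simp add: weight_vector_K emb_mult_left_commute[of "Ki i"])
  also have "\<dots> = emb (vq powi (- \<mu> i)) * z"
    using Ki_K[OF assms(2)] by (simp flip: mult.assoc)
  finally show ?thesis .
qed

lemma weight_vector_E:
  assumes "weight_vector \<mu> z" and "j \<in> {1..n}"
  shows "weight_vector (\<lambda>i. \<mu> i + epsp n i j) (E j * z)"
  unfolding weight_vector_def
proof
  fix i assume "i \<in> {1..n}"
  then have "K i * (E j * z) = emb (vq powi epsp n i j) * (E j * (emb (vq powi \<mu> i) * z))"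
    using assms by (simp add: K_E weight_vector_K mult.assoc flip: mult.assoc[of "K i"])
  also have "\<dots> = emb (vq powi (\<mu> i + epsp n i j)) * (E j * z)"
    using vq_nonzero
    by (simp add: emb_mult_left_commute[of "E j"] emb_mult_emb power_int_add mult.commute)
  finally show "K i * (E j * z) = emb (vq powi (\<mu> i + epsp n i j)) * (E j * z)" .
qed

lemma weight_vector_F:
  assumes "weight_vector \<mu> z" and "j \<in> {1..n}"
  shows "weight_vector (\<lambda>i. \<mu> i - epsp n i j) (F j * z)"
  unfolding weight_vector_def
proof
  fix i assume "i \<in> {1..n}"
  then have "K i * (F j * z) = emb (vq powi (- epsp n i j)) * (F j * (emb (vq powi \<mu> i) * z))"
    using assms by (simp add: K_F weight_vector_K mult.assoc flip: mult.assoc[of "K i"])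
  also have "\<dots> = emb (vq powi (\<mu> i - epsp n i j)) * (F j * z)"
    using vq_nonzero
    by (simp add: emb_mult_left_commute[of "F j"] emb_mult_emb power_int_add[symmetric] mult.commute)
  finally show "K i * (F j * z) = emb (vq powi (\<mu> i - epsp n i j)) * (F j * z)" .
qed

lemma weight_vector_prod_E:
  "weight_vector \<mu> z \<Longrightarrow> set js \<subseteq> {1..n} \<Longrightarrow>
    weight_vector (\<lambda>i. \<mu> i + sum_list (map (epsp n i) js)) (prod_list (map E js) * z)"
proof (induction js)
  case (Cons j js)
  then have "weight_vector (\<lambda>i. \<mu> i + sum_list (map (epsp n i) js) + epsp n i j)
      (E j * (prod_list (map E js) * z))"
    by (intro weight_vector_E) simp_all
  then show ?case
    by (simp add: mult.assoc add_ac)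
qed simp

lemma weight_vector_prod_F:
  "weight_vector \<mu> z \<Longrightarrow> set js \<subseteq> {1..n} \<Longrightarrow>
    weight_vector (\<lambda>i. \<mu> i - sum_list (map (epsp n i) js)) (prod_list (map F js) * z)"
proof (induction js)
  case (Cons j js)
  then have "weight_vector (\<lambda>i. \<mu> i - sum_list (map (epsp n i) js) - epsp n i j)
      (F j * (prod_list (map F js) * z))"
    by (intro weight_vector_F) simp_all
  then show ?case
    by (simp add: mult.assoc algebra_simps)
qed simp

lemma weight_vector_eq_0:
  assumes "weight_vector \<mu> z" and "i \<in> {1..n}" and "\<mu> i < 0"
  shows "z = 0"
proof (rule emb_mult_eq_0_cancel)
  show "prod_list (map (\<lambda>j. vq powi \<mu> i - vq ^ j) [0..<r+1]) \<noteq> 0"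
    using assms(3) by (auto simp: prod_list_zero_iff vq_power_int_eq_iff simp flip: power_int_of_nat)
  have "emb (prod_list (map (\<lambda>j. vq powi \<mu> i - vq ^ j) [0..<r+1])) * z
      = prod_list (map (\<lambda>j. K i - emb (vq ^ j)) [0..<r+1]) * z"
    using assms(1,2)
    by (intro prod_list_mult_eigenvector[symmetric]) (simp add: left_diff_distrib emb_diff weight_vector_K)
  then show "emb (prod_list (map (\<lambda>j. vq powi \<mu> i - vq ^ j) [0..<r+1])) * z = 0"
    using K_annihilator[OF assms(2)] by simp
qed

lemma commutator_mult_weight_vector:
  assumes "weight_vector \<mu> z" and "i \<in> {1..n}"
  shows "(E i * F i - F i * E i) * z =
    emb ((vq powi (\<mu> i - \<mu> (sc n i)) - vq powi (\<mu> (sc n i) - \<mu> i)) / (vq - inverse vq)) * z"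
proof -
  have "sc n i \<in> {1..n}"
    using assms(2) by (auto simp: sc_def)
  have "K i * (Ki (sc n i) * z) = emb (vq powi (\<mu> i - \<mu> (sc n i))) * z"
    using assms \<open>sc n i \<in> {1..n}\<close> vq_nonzero
    by (simp add: weight_vector_Ki weight_vector_K emb_mult_left_commute[of "K i"] emb_mult_emb
        power_int_diff field_simps power_int_minus)
  moreover have "Ki i * (K (sc n i) * z) = emb (vq powi (\<mu> (sc n i) - \<mu> i)) * z"
    using assms \<open>sc n i \<in> {1..n}\<close> vq_nonzero
    by (simp add: weight_vector_Ki weight_vector_K emb_mult_left_commute[of "Ki i"] emb_mult_emb
        power_int_diff field_simps power_int_minus)
  ultimately show ?thesis
    using E_F_commutator[OF assms(2) assms(2)]
    by (simp add: mult.assoc left_diff_distrib right_diff_distrib emb_mult_emb divide_inverse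
        mult.commute emb_diff)
qed

lemma F_E_cancel:
  assumes "weight_vector \<mu> z" and "i \<in> {1..n}" and "\<mu> i = 0" and "\<mu> (sc n i) = 1"
  shows "F i * (E i * z) = z"
proof -
  have "weight_vector (\<lambda>l. \<mu> l - epsp n l i) (F i * z)"
    using assms(1,2) by (rule weight_vector_F)
  then have "F i * z = 0"
    using assms(2) by (rule weight_vector_eq_0) (simp add: epsp_def assms(3))
  moreover have "(vq powi (-1) - vq powi 1) / (vq - inverse vq) = -1"
    using vq_minus_inverse_nonzero by (simp add: power_int_minus field_simps)
  ultimately show ?thesis
    using commutator_mult_weight_vector[OF assms(1,2)] assms(3,4)
    by (simp add: mult.assoc left_diff_distrib emb_minus)
qed

lemma E_F_cancel:
  assumes "weight_vector \<mu> z" and "i \<in> {1..n}" and "\<mu> i = 1" and "\<mu> (sc n i) = 0"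
  shows "E i * (F i * z) = z"
proof -
  have "sc n i \<in> {1..n}" "sc n i \<noteq> i"
    using assms by (auto simp: sc_def)
  have "weight_vector (\<lambda>l. \<mu> l + epsp n l i) (E i * z)"
    using assms(1,2) by (rule weight_vector_E)
  then have "E i * z = 0"
    using \<open>sc n i \<in> {1..n}\<close> by (rule weight_vector_eq_0)
      (use assms(2,4) \<open>sc n i \<noteq> i\<close> in \<open>simp add: epsp_def pr_sc\<close>)
  moreover have "(vq powi 1 - vq powi (-1)) / (vq - inverse vq) = 1"
    using vq_minus_inverse_nonzero by (simp add: power_int_minus)
  ultimately show ?thesis
    using commutator_mult_weight_vector[OF assms(1,2)] assms(3,4)
    by (simp add: mult.assoc left_diff_distrib)
qed

lemma weight_vector_prod_E_all_but:
  assumes "weight_vector \<mu> z" and "2 \<le> n" and "distinct js" and "set js = {1..n} - {j}"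
  shows "weight_vector (\<lambda>i. \<mu> i - epsp n i j) (prod_list (map E js) * z)"
proof (rule weight_vector_cong[OF weight_vector_prod_E[OF assms(1)]])
  show "set js \<subseteq> {1..n}"
    using assms(4) by auto
  fix i assume "i \<in> {1..n}"
  moreover have "pr n i \<in> {1..n}" and "pr n i \<noteq> i"
    using \<open>i \<in> {1..n}\<close> assms(2) by (auto simp: pr_def)
  ultimately show "\<mu> i + sum_list (map (epsp n i) js) = \<mu> i - epsp n i j"
    using assms(3,4) by (simp add: sum_list_epsp epsp_def)
qed

lemma weight_vector_prod_F_all_but:
  assumes "weight_vector \<mu> z" and "2 \<le> n" and "distinct js" and "set js = {1..n} - {j}"
  shows "weight_vector (\<lambda>i. \<mu> i + epsp n i j) (prod_list (map F js) * z)"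
proof (rule weight_vector_cong[OF weight_vector_prod_F[OF assms(1)]])
  show "set js \<subseteq> {1..n}"
    using assms(4) by auto
  fix i assume "i \<in> {1..n}"
  moreover have "pr n i \<in> {1..n}" and "pr n i \<noteq> i"
    using \<open>i \<in> {1..n}\<close> assms(2) by (auto simp: pr_def)
  ultimately show "\<mu> i - sum_list (map (epsp n i) js) = \<mu> i + epsp n i j"
    using assms(3,4) by (simp add: sum_list_epsp epsp_def)
qed

text \<open>Read a weight with entries 0 and 1 as occupied and empty sites. Applying
  \<open>E\<^sub>a, \<dots>, E\<^sub>b\<^sub>-\<^sub>1\<close> in turn moves an empty site from \<open>a\<close> to \<open>b\<close>, applying \<open>E\<^sub>b\<^sub>-\<^sub>1, \<dots>, E\<^sub>a\<close> moves an
  occupied site from \<open>b\<close> to \<open>a\<close>, and the \<open>F\<close>'s undo these moves step by step; the last two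
  lemmas are the same with the roles of \<open>E\<close> and \<open>F\<close> exchanged.\<close>
lemma prod_F_upt_prod_E_rev_upt:
  assumes "weight_vector \<mu> z" and "1 \<le> a" and "a \<le> b" and "b \<le> n"
    and "\<mu> a = 0" and "\<forall>i\<in>{a<..b}. \<mu> i = 1"
  shows "prod_list (map F [a..<b]) * (prod_list (map E (rev [a..<b])) * z) = z"
  using assms
proof (induction "b - a" arbitrary: a \<mu> z)
  case (Suc d)
  then have a: "a \<in> {1..n}" "sc n a = Suc a" "[a..<b] = a # [Suc a..<b]"
    by (auto simp: sc_def upt_conv_Cons)
  have shifted: "weight_vector (\<lambda>i. \<mu> i + epsp n i a) (E a * z)"
    using Suc.prems(1) a(1) by (rule weight_vector_E)
  have "prod_list (map F [Suc a..<b]) * (prod_list (map E (rev [Suc a..<b])) * (E a * z)) = E a * z"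
    by (rule Suc.hyps(1)[OF _ shifted]) (use Suc in \<open>auto simp: epsp_def pr_def\<close>)
  moreover have "F a * (E a * z) = z"
    by (rule F_E_cancel[OF Suc.prems(1) a(1)]) (use Suc a in auto)
  ultimately show ?case
    using a(3) by (simp add: mult.assoc)
qed simp

lemma prod_F_rev_upt_prod_E_upt:
  assumes "weight_vector \<mu> z" and "1 \<le> a" and "a \<le> b" and "b \<le> n"
    and "\<mu> b = 1" and "\<forall>i\<in>{a..<b}. \<mu> i = 0"
  shows "prod_list (map F (rev [a..<b])) * (prod_list (map E [a..<b]) * z) = z"
  using assms
proof (induction "b - a" arbitrary: b \<mu> z)
  case (Suc d)
  then obtain c where c: "b = Suc c" "a \<le> c" "c \<in> {1..n}" "sc n c = b" "[a..<b] = [a..<c] @ [c]"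
    by (cases b) (auto simp: sc_def)
  have shifted: "weight_vector (\<lambda>i. \<mu> i + epsp n i c) (E c * z)"
    using Suc.prems(1) c(3) by (rule weight_vector_E)
  have "prod_list (map F (rev [a..<c])) * (prod_list (map E [a..<c]) * (E c * z)) = E c * z"
    by (rule Suc.hyps(1)[OF _ shifted]) (use Suc c in \<open>auto simp: epsp_def pr_def\<close>)
  moreover have "F c * (E c * z) = z"
    by (rule F_E_cancel[OF Suc.prems(1) c(3)]) (use Suc c in auto)
  ultimately show ?case
    using c(5) by (simp add: mult.assoc)
qed simp

lemma prod_E_rev_upt_prod_F_upt:
  assumes "weight_vector \<mu> z" and "1 \<le> a" and "a \<le> b" and "b \<le> n"
    and "\<mu> b = 0" and "\<forall>i\<in>{a..<b}. \<mu> i = 1"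
  shows "prod_list (map E (rev [a..<b])) * (prod_list (map F [a..<b]) * z) = z"
  using assms
proof (induction "b - a" arbitrary: b \<mu> z)
  case (Suc d)
  then obtain c where c: "b = Suc c" "a \<le> c" "c \<in> {1..n}" "sc n c = b" "[a..<b] = [a..<c] @ [c]"
    by (cases b) (auto simp: sc_def)
  have shifted: "weight_vector (\<lambda>i. \<mu> i - epsp n i c) (F c * z)"
    using Suc.prems(1) c(3) by (rule weight_vector_F)
  have "prod_list (map E (rev [a..<c])) * (prod_list (map F [a..<c]) * (F c * z)) = F c * z"
    by (rule Suc.hyps(1)[OF _ shifted]) (use Suc c in \<open>auto simp: epsp_def pr_def\<close>)
  moreover have "E c * (F c * z) = z"
    by (rule E_F_cancel[OF Suc.prems(1) c(3)]) (use Suc c in auto)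
  ultimately show ?case
    using c(5) by (simp add: mult.assoc)
qed simp

lemma prod_E_upt_prod_F_rev_upt:
  assumes "weight_vector \<mu> z" and "1 \<le> a" and "a \<le> b" and "b \<le> n"
    and "\<mu> a = 1" and "\<forall>i\<in>{a<..b}. \<mu> i = 0"
  shows "prod_list (map E [a..<b]) * (prod_list (map F (rev [a..<b])) * z) = z"
  using assms
proof (induction "b - a" arbitrary: a \<mu> z)
  case (Suc d)
  then have a: "a \<in> {1..n}" "sc n a = Suc a" "[a..<b] = a # [Suc a..<b]"
    by (auto simp: sc_def upt_conv_Cons)
  have shifted: "weight_vector (\<lambda>i. \<mu> i - epsp n i a) (F a * z)"
    using Suc.prems(1) a(1) by (rule weight_vector_F)
  have "prod_list (map E [Suc a..<b]) * (prod_list (map F (rev [Suc a..<b])) * (F a * z)) = F a * z"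
    by (rule Suc.hyps(1)[OF _ shifted]) (use Suc in \<open>auto simp: epsp_def pr_def\<close>)
  moreover have "E a * (F a * z) = z"
    by (rule E_F_cancel[OF Suc.prems(1) a(1)]) (use Suc a in auto)
  ultimately show ?case
    using a(3) by (simp add: mult.assoc)
qed simp

lemma one_lam_mult_weight_vector:
  assumes "weight_vector \<mu> y"
  shows "one_lam n emb K Ki lam * y = emb (one_lam_scalar n lam \<mu>) * y"
  unfolding one_lam_def one_lam_scalar_def
proof (intro prod_list_mult_eigenvector)
  fix i assume "i \<in> set [1..<n+1]"
  then have i: "i \<in> {1..n}" by auto
  fix s
  let ?A = "inverse (vq ^ s - inverse (vq ^ s))"
  let ?B = "vq powi (- int s + 1)" and ?C = "vq powi (int s - 1)"
  have "emb ?A * (emb ?B * K i - emb ?C * Ki i) * y = emb ?A * (emb ?B * (K i * y) - emb ?C * (Ki i * y))"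
    by (simp add: mult.assoc left_diff_distrib)
  also have "\<dots> = emb (?A * (?B * vq powi \<mu> i - ?C * vq powi (- \<mu> i))) * y"
    using assms i
    by (simp add: weight_vector_K weight_vector_Ki emb_mult_emb emb_diff right_diff_distrib
        left_diff_distrib mult.assoc)
  finally show "emb ?A * (emb ?B * K i - emb ?C * Ki i) * y =
      emb (?A * (?B * vq powi \<mu> i - ?C * vq powi (- \<mu> i))) * y" .
qed

lemma K_mult_eigenvector:
  assumes "i \<in> {1..n}" and "k \<in> {1..n}" and "K i * a = emb c * a"
  shows "K i * (K k * a) = emb c * (K k * a)"
proof -
  have "K i * (K k * a) = K k * (K i * a)"
    using assms(1,2) by (metis K_commute mult.assoc)
  also have "\<dots> = emb c * (K k * a)"
    using assms(3) by (simp add: emb_mult_left_commute[of "K k"])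
  finally show ?thesis .
qed

lemma weight_space_induct:
  assumes G_0: "G 0" and G_add: "\<And>a b. G a \<Longrightarrow> G b \<Longrightarrow> G (a + b)"
    and G_scale: "\<And>c a. G a \<Longrightarrow> G (emb c * a)"
    and G_weight: "\<And>y m. \<forall>i\<in>{1..n}. K i * y = emb (vq ^ m i) * y \<Longrightarrow> G y"
  shows "G x"
proof -
  have "\<forall>m y. (\<forall>i\<in>{1..n} - I. K i * y = emb (vq ^ m i) * y) \<longrightarrow> G y"
    if "finite I" and "I \<subseteq> {1..n}" for I
    using that
  proof (induction I rule: finite_induct)
    case empty
    then show ?case using G_weight by auto
  next
    case (insert k I)
    show ?case
    proof (intro allI impI)
      fix m y
      let ?P = "\<lambda>w. \<forall>i\<in>{1..n} - insert k I. K i * w = emb (vq ^ m i) * w"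
      assume "?P y"
      have k: "k \<in> {1..n}"
        using insert.prems by auto
      show "G y"
      proof (rule eigenvector_induct[where X = "K k" and cs = "map (\<lambda>a. vq ^ a) [0..<r+1]" and P = ?P])
        show "distinct (map (\<lambda>a. vq ^ a) [0..<r+1])"
          by (rule distinct_map[THEN iffD2]) (simp add: inj_on_def vq_power_eq_iff)
        show "prod_list (map (\<lambda>c. K k - emb c) (map (\<lambda>a. vq ^ a) [0..<r+1])) * y = 0"
          using K_annihilator[OF k] by (simp add: comp_def)
        show "?P (a - b)" if "?P a" and "?P b" for a b
          using that by (simp add: right_diff_distrib)
        show "?P (emb c * a)" if "?P a" for c a
          using that by (simp add: emb_mult_left_commute[of "K _"] emb_mult_emb mult.commute)
        show "?P (K k * a)" if "?P a" for a
          using that k by (blast intro: K_mult_eigenvector)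
        show "G w" if w: "?P w" and c: "c \<in> set (map (\<lambda>a. vq ^ a) [0..<r+1])"
          and eigen: "K k * w = emb c * w" for w c
        proof -
          obtain a where "c = vq ^ a"
            using c by auto
          then have "\<forall>i\<in>{1..n} - I. K i * w = emb (vq ^ (m(k := a)) i) * w"
            using w eigen by auto
          then show "G w"
            using insert.IH insert.prems by blast
        qed
      qed fact+
    qed
  qed
  then show ?thesis
    by auto
qed

lemma joint_eigenvector_weight_sum:
  assumes "\<forall>i\<in>{1..n}. K i * y = emb (vq ^ m i) * y" and "y \<noteq> 0"
  shows "sum m {1..n} = r"
proof -
  have "prod_list (map K [1..<n+1]) * y = emb (prod_list (map (\<lambda>i. vq ^ m i) [1..<n+1])) * y"
    using assms(1) by (intro prod_list_mult_eigenvector) auto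
  also have "prod_list (map (\<lambda>i. vq ^ m i) xs) = vq ^ sum_list (map m xs)" for xs
    by (induction xs) (simp_all add: power_add)
  also have "sum_list (map m [1..<n+1]) = sum m {1..n}"
    by (simp only: interv_sum_list_conv_sum_set_nat set_upt)
      (simp add: atLeastLessThanSuc_atLeastAtMost)
  finally have "emb (vq ^ r) * y = emb (vq ^ sum m {1..n}) * y"
    by (simp only: prod_K)
  then have "emb (vq ^ sum m {1..n} - vq ^ r) * y = 0"
    by (simp add: emb_diff left_diff_distrib)
  then have "vq ^ sum m {1..n} - vq ^ r = 0"
    using assms(2) emb_mult_eq_0_cancel by blast
  then show ?thesis
    by (simp add: vq_power_eq_iff)
qed

lemma prod_F_prod_E_commute:
  assumes "set ls \<subseteq> {1..n}" and "set js \<subseteq> {1..n}" and "set ls \<inter> set js = {}"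
  shows "prod_list (map F ls) * prod_list (map E js) = prod_list (map E js) * prod_list (map F ls)"
  using assms by (intro prod_list_map_commute) (metis E_F_commute disjoint_iff subsetD)

lemma one_lam_omega_weight_vector:
  assumes "r \<le> n"
  shows "weight_vector (\<lambda>i. int (omega r i)) (one_lam n emb K Ki (omega r))"
  unfolding weight_vector_def
proof
  fix j assume "j \<in> {1..n}"
  let ?e = "one_lam n emb K Ki (omega r)"
  have "K j * (?e * x) = emb (vq ^ omega r j) * (?e * x)" for x
  proof (rule weight_space_induct[where G = "\<lambda>x. K j * (?e * x) = emb (vq ^ omega r j) * (?e * x)"])
    show "K j * (?e * (a + b)) = emb (vq ^ omega r j) * (?e * (a + b))"
      if "K j * (?e * a) = emb (vq ^ omega r j) * (?e * a)"
        and "K j * (?e * b) = emb (vq ^ omega r j) * (?e * b)" for a b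
      using that by (simp add: distrib_left)
    show "K j * (?e * (emb c * a)) = emb (vq ^ omega r j) * (?e * (emb c * a))"
      if "K j * (?e * a) = emb (vq ^ omega r j) * (?e * a)" for c a
      using that
      by (simp add: emb_mult_left_commute[of ?e] emb_mult_left_commute[of "K j"] emb_mult_emb
          mult.commute)
    show "K j * (?e * y) = emb (vq ^ omega r j) * (?e * y)"
      if y: "\<forall>i\<in>{1..n}. K i * y = emb (vq ^ m i) * y" for y m
    proof -
      let ?\<gamma> = "one_lam_scalar n (omega r) (\<lambda>i. int (m i))"
      have e_y: "?e * y = emb ?\<gamma> * y"
        using y by (intro one_lam_mult_weight_vector) (simp add: weight_vector_def)
      show ?thesis
      proof (cases "y = 0 \<or> ?\<gamma> = 0")
        case True
        then show ?thesis
          using e_y by auto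
      next
        case False
        have "sum (omega r) {1..n} = sum m {1..n}"
          using joint_eigenvector_weight_sum[OF y] sum_omega[OF assms] False by simp
        moreover have "omega r i \<le> m i" if "i \<in> {1..n}" for i
          using one_lam_scalar_eq_0[OF that, where lam = "omega r" and \<mu> = "\<lambda>i. int (m i)"] False
          by (cases "i \<le> r") (auto simp: omega_def Suc_le_eq intro!: gr0I)
        ultimately have "omega r j = m j"
          using sum_mono_inv[of "omega r" "{1..n}" m j] \<open>j \<in> {1..n}\<close> by simp
        have "K j * (?e * y) = emb ?\<gamma> * (K j * y)"
          using e_y by (simp add: emb_mult_left_commute[of "K j"])
        also have "\<dots> = emb ?\<gamma> * (emb (vq ^ m j) * y)"
          using y \<open>j \<in> {1..n}\<close> by simp
        also have "\<dots> = emb (vq ^ omega r j) * (?e * y)"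
          using e_y \<open>omega r j = m j\<close> by (simp add: emb_mult_emb mult.commute)
        finally show ?thesis .
      qed
    qed
  qed simp
  from this[of 1] show "K j * ?e = emb (vq powi int (omega r j)) * ?e"
    by simp
qed

lemma one_lam_omega_mult_eq:
  "weight_vector (\<lambda>i. int (omega r i)) y \<Longrightarrow> one_lam n emb K Ki (omega r) * y = y"
  using one_lam_mult_weight_vector one_lam_scalar_self[of "omega r"] by (simp add: omega_def)

lemma zeta_rho_inv_mult_zeta_rho:
  assumes "1 \<le> r" and "r < n"
  shows "zeta_rho_inv n r emb F K Ki * zeta_rho n r emb E K Ki = one_lam n emb K Ki (omega r)"
proof -
  define e where "e = one_lam n emb K Ki (omega r)"
  define \<omega> where "\<omega> = (\<lambda>i. int (omega r i))"
  define A where "A = prod_list (map F (rev [r+1..<n]))"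
  define B where "B = prod_list (map F [1..<r])"
  define C where "C = prod_list (map E [r+1..<n])"
  define D where "D = prod_list (map E (rev [1..<r]))"
  define x where "x = E n * e"
  have indices: "n \<in> {1..n}" "r \<in> {1..n}" "2 \<le> n"
    using assms by auto
  have e_weight: "weight_vector \<omega> e"
    unfolding e_def \<omega>_def using assms by (intro one_lam_omega_weight_vector) simp
  have x_weight: "weight_vector (\<lambda>i. \<omega> i + epsp n i n) x"
    unfolding x_def using e_weight indices(1) by (rule weight_vector_E)
  have "C * (D * x) = prod_list (map E ([r+1..<n] @ rev [1..<r] @ [n])) * e"
    by (simp add: C_def D_def x_def mult.assoc)
  also have "weight_vector (\<lambda>i. \<omega> i - epsp n i r) \<dots>"
    using assms by (intro weight_vector_prod_E_all_but[OF e_weight indices(3)]) auto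
  finally have CDx_weight: "weight_vector (\<lambda>i. \<omega> i - epsp n i r) (C * (D * x))" .
  have "weight_vector \<omega> (E r * (C * (D * x)))"
    using weight_vector_E[OF CDx_weight indices(2)] by (rule weight_vector_cong) simp
  then have "e * (E r * (C * (D * x))) = E r * (C * (D * x))"
    unfolding e_def \<omega>_def by (rule one_lam_omega_mult_eq)
  then have "zeta_rho_inv n r emb F K Ki * zeta_rho n r emb E K Ki
      = F n * (A * (B * (F r * (E r * (C * (D * x))))))"
    using assms
    by (simp add: zeta_rho_inv_def zeta_rho_def A_def B_def C_def D_def x_def upt_conv_Cons
        mult.assoc flip: e_def)
  also have "F r * (E r * (C * (D * x))) = C * (D * x)"
    using CDx_weight indices(2)
    by (rule F_E_cancel) (use assms in \<open>simp_all add: \<omega>_def omega_def epsp_def sc_def pr_def\<close>)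
  also have "B * (C * (D * x)) = C * (B * (D * x))"
  proof -
    have "B * C = C * B"
      unfolding B_def C_def by (rule prod_F_prod_E_commute) (use assms in auto)
    then show ?thesis
      by (metis mult.assoc)
  qed
  also have "B * (D * x) = x"
    unfolding B_def D_def using x_weight
    by (rule prod_F_upt_prod_E_rev_upt) (use assms in \<open>auto simp: \<omega>_def omega_def epsp_def pr_def\<close>)
  also have "A * (C * x) = x"
    unfolding A_def C_def using x_weight
    by (rule prod_F_rev_upt_prod_E_upt) (use assms in \<open>auto simp: \<omega>_def omega_def epsp_def pr_def\<close>)
  also have "F n * x = e"
    unfolding x_def using e_weight indices(1)
    by (rule F_E_cancel) (use assms in \<open>simp_all add: \<omega>_def omega_def sc_def\<close>)
  finally show ?thesis
    unfolding e_def .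
qed


lemma zeta_rho_mult_zeta_rho_inv:
  assumes "1 \<le> r" and "r < n"
  shows "zeta_rho n r emb E K Ki * zeta_rho_inv n r emb F K Ki = one_lam n emb K Ki (omega r)"
proof -
  define e where "e = one_lam n emb K Ki (omega r)"
  define \<omega> where "\<omega> = (\<lambda>i. int (omega r i))"
  define A where "A = prod_list (map F (rev [r+1..<n]))"
  define B where "B = prod_list (map F [1..<r])"
  define C where "C = prod_list (map E [r+1..<n])"
  define D where "D = prod_list (map E (rev [1..<r]))"
  define u where "u = A * (B * (F r * e))"
  have indices: "n \<in> {1..n}" "r \<in> {1..n}" "2 \<le> n"
    using assms by auto
  have e_weight: "weight_vector \<omega> e"
    unfolding e_def \<omega>_def using assms by (intro one_lam_omega_weight_vector) simp
  have Fe_weight: "weight_vector (\<lambda>i. \<omega> i - epsp n i r) (F r * e)"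
    using e_weight indices(2) by (rule weight_vector_F)
  have "u = prod_list (map F (rev [r+1..<n] @ [1..<r] @ [r])) * e"
    by (simp add: u_def A_def B_def mult.assoc)
  also have "weight_vector (\<lambda>i. \<omega> i + epsp n i n) \<dots>"
    using assms by (intro weight_vector_prod_F_all_but[OF e_weight indices(3)]) auto
  finally have u_weight: "weight_vector (\<lambda>i. \<omega> i + epsp n i n) u" .
  have "weight_vector \<omega> (F n * u)"
    using weight_vector_F[OF u_weight indices(1)] by (rule weight_vector_cong) simp
  then have "e * (F n * u) = F n * u"
    unfolding e_def \<omega>_def by (rule one_lam_omega_mult_eq)
  then have "zeta_rho n r emb E K Ki * zeta_rho_inv n r emb F K Ki
      = E r * (C * (D * (E n * (F n * u))))"
    using assms
    by (simp add: zeta_rho_inv_def zeta_rho_def A_def B_def C_def D_def u_def upt_conv_Cons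
        mult.assoc flip: e_def)
  also have "E n * (F n * u) = u"
    using u_weight indices(1)
    by (rule E_F_cancel) (use assms in \<open>simp_all add: \<omega>_def omega_def epsp_def sc_def pr_def\<close>)
  also have "D * u = A * (D * (B * (F r * e)))"
  proof -
    have "A * D = D * A"
      unfolding A_def D_def by (rule prod_F_prod_E_commute) (use assms in auto)
    then show ?thesis
      unfolding u_def by (metis mult.assoc)
  qed
  also have "D * (B * (F r * e)) = F r * e"
    unfolding B_def D_def using Fe_weight
    by (rule prod_E_rev_upt_prod_F_upt) (use assms in \<open>auto simp: \<omega>_def omega_def epsp_def pr_def\<close>)
  also have "C * (A * (F r * e)) = F r * e"
    unfolding A_def C_def using Fe_weight
    by (rule prod_E_upt_prod_F_rev_upt) (use assms in \<open>auto simp: \<omega>_def omega_def epsp_def pr_def\<close>)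
  also have "E r * (F r * e) = e"
    using e_weight indices(2)
    by (rule E_F_cancel) (use assms in \<open>simp_all add: \<omega>_def omega_def sc_def\<close>)
  finally show ?thesis
    unfolding e_def .
qed

end

theorem lemma2p3p5:
  fixes n r :: nat and emb :: "qv \<Rightarrow> 'a::ring_1"
    and E F K Ki :: "nat \<Rightarrow> 'a"
  assumes "r \<ge> 3" and "n > r" and "T_rel n r emb E F K Ki"
  shows "zeta_rho_inv n r emb F K Ki * zeta_rho n r emb E K Ki = one_lam n emb K Ki (omega r) \<and>
         zeta_rho n r emb E K Ki * zeta_rho_inv n r emb F K Ki = one_lam n emb K Ki (omega r)"
proof -
  interpret T_algebra n r emb E F K Ki
    using assms(3) by (rule T_algebra.intro)
  show ?thesis
    using assms(1,2) zeta_rho_inv_mult_zeta_rho zeta_rho_mult_zeta_rho_inv by simp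
qed

end
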